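(* Let $(A,B,Z,T)$ be a Hopf-Galois system over a field $k$, with structure maps $\alpha,\beta,\gamma,\delta,S$ as in the context. Then $Z$ is an $A$-$B$-biGalois extension, i.e. the linear maps $$\kappa_l=(1_A\otimes m_Z)\circ(\alpha\otimes 1_Z):Z\otimes Z\to A\otimes Z,\qquad \kappa_r=(m_Z\otimes 1_B)\circ(1_Z\otimes\beta):Z\otimes Z\to Z\otimes B$$ are both bijective.
   Context: All tensor products are over a field $k$; $m_X$, $u_X$ denote multiplication and unit of an algebra $X$, $\Delta_X,\varepsilon_X$ comultiplication and counit of a bialgebra $X$. A Hopf-Galois system consists of four non-zero $k$-algebras $(A,B,Z,T)$ such that: (HG1) $A$ and $B$ are bialgebras; (HG2) $Z$ is an $A$-$B$-bicomodule algebra, with left $A$-coaction $\alpha:Z\to A\otimes Z$ and right $B$-coaction $\beta:Z\to Z\otimes B$ (both algebra morphisms, commuting with each other); (HG3) there are algebra morphisms $\gamma:A\to Z\otimes T$ and $\delta:B\to T\otimes Z$ such that $(\gamma\otimes 1_Z)\circ\alpha=(1_Z\otimes\delta)\circ\beta$, $(\alpha\otimes 1_T)\circ\gamma=(1_A\otimes\gamma)\circ\Delta_A$, and $(1_T\otimes\beta)\circ\delta=(\delta\otimes 1_B)\circ\Delta_B$; (HG4) there is a linear map $S:T\to Z$ such that $m_Z\circ(1_Z\otimes S)\circ\gamma=u_Z\circ\varepsilon_A$ and $m_Z\circ(S\otimes 1_Z)\circ\delta=u_Z\circ\varepsilon_B$. *)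

theory Defs
  imports Main
begin

text \<open>
Model: every vector space over the field 'k has a basis, so a k-vector space with basis
indexed by a type 'a is represented as the space of finitely supported functions
'a => 'k (the carrier fsupp).  The tensor product of the spaces with bases 'a and 'b is
the space with basis 'a * 'b; the tensor of vectors u, v is (x,y) |-> u x * v y.
Linear maps are functions on vectors which are linear on fsupp; all equations between
maps are required on fsupp.  The ground field k (as a 1-dimensional space) is 'k itself.
\<close>

definition fsupp :: "('a \<Rightarrow> 'k::zero) set" where
  "fsupp = {v. finite {x. v x \<noteq> 0}}"

definition vsupp :: "('a \<Rightarrow> 'k::zero) \<Rightarrow> 'a set" where
  "vsupp v = {x. v x \<noteq> 0}"

definition delta :: "'a \<Rightarrow> 'a \<Rightarrow> 'k::zero_neq_one" where
  "delta x = (\<lambda>y. if y = x then 1 else 0)"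

definition vadd :: "('a \<Rightarrow> 'k::plus) \<Rightarrow> ('a \<Rightarrow> 'k) \<Rightarrow> 'a \<Rightarrow> 'k" where
  "vadd u v = (\<lambda>x. u x + v x)"

definition smult :: "'k::times \<Rightarrow> ('a \<Rightarrow> 'k) \<Rightarrow> 'a \<Rightarrow> 'k" where
  "smult c v = (\<lambda>x. c * v x)"

definition linmap :: "(('a \<Rightarrow> 'k::field) \<Rightarrow> ('b \<Rightarrow> 'k)) \<Rightarrow> bool" where
  "linmap F \<longleftrightarrow> (\<forall>v\<in>fsupp. F v \<in> fsupp)
     \<and> (\<forall>u\<in>fsupp. \<forall>v\<in>fsupp. F (vadd u v) = vadd (F u) (F v))
     \<and> (\<forall>c. \<forall>v\<in>fsupp. F (smult c v) = smult c (F v))"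

definition linfun :: "(('a \<Rightarrow> 'k::field) \<Rightarrow> 'k) \<Rightarrow> bool" where
  "linfun f \<longleftrightarrow> (\<forall>u\<in>fsupp. \<forall>v\<in>fsupp. f (vadd u v) = f u + f v)
     \<and> (\<forall>c. \<forall>v\<in>fsupp. f (smult c v) = c * f v)"

definition lext :: "('a \<Rightarrow> 'b \<Rightarrow> 'k::comm_semiring_1) \<Rightarrow> ('a \<Rightarrow> 'k) \<Rightarrow> 'b \<Rightarrow> 'k" where
  "lext f v = (\<lambda>y. \<Sum>x\<in>vsupp v. v x * f x y)"

definition tens :: "('a \<Rightarrow> 'k::times) \<Rightarrow> ('b \<Rightarrow> 'k) \<Rightarrow> 'a \<times> 'b \<Rightarrow> 'k" where
  "tens u v = (\<lambda>(x, y). u x * v y)"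

definition tmap :: "(('a \<Rightarrow> 'k) \<Rightarrow> ('c \<Rightarrow> 'k)) \<Rightarrow> (('b \<Rightarrow> 'k) \<Rightarrow> ('d \<Rightarrow> 'k))
    \<Rightarrow> ('a \<times> 'b \<Rightarrow> 'k::comm_semiring_1) \<Rightarrow> 'c \<times> 'd \<Rightarrow> 'k" where
  "tmap F G = lext (\<lambda>(x, y). tens (F (delta x)) (G (delta y)))"

definition tassoc :: "(('a \<times> 'b) \<times> 'c \<Rightarrow> 'k) \<Rightarrow> 'a \<times> ('b \<times> 'c) \<Rightarrow> 'k" where
  "tassoc w = (\<lambda>(a, (b, c)). w ((a, b), c))"

definition tunassoc :: "('a \<times> ('b \<times> 'c) \<Rightarrow> 'k) \<Rightarrow> ('a \<times> 'b) \<times> 'c \<Rightarrow> 'k" where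
  "tunassoc w = (\<lambda>((a, b), c). w (a, (b, c)))"

text \<open>(f (x) 1) : X (x) Y -> k (x) Y = Y  and  (1 (x) f) : X (x) Y -> X (x) k = X
  for a linear functional f.\<close>
definition lcontr :: "(('a \<Rightarrow> 'k) \<Rightarrow> 'k) \<Rightarrow> ('a \<times> 'b \<Rightarrow> 'k::comm_semiring_1) \<Rightarrow> 'b \<Rightarrow> 'k" where
  "lcontr f = lext (\<lambda>(x, y). smult (f (delta x)) (delta y))"

definition rcontr :: "(('b \<Rightarrow> 'k) \<Rightarrow> 'k) \<Rightarrow> ('a \<times> 'b \<Rightarrow> 'k::comm_semiring_1) \<Rightarrow> 'a \<Rightarrow> 'k" where
  "rcontr f = lext (\<lambda>(x, y). smult (f (delta y)) (delta x))"

definition tmid :: "(('a \<times> 'b) \<times> ('a \<times> 'b) \<Rightarrow> 'k) \<Rightarrow> ('a \<times> 'a) \<times> ('b \<times> 'b) \<Rightarrow> 'k" where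
  "tmid w = (\<lambda>((a, a'), (b, b')). w ((a, b), (a', b')))"

definition tens_mult :: "(('a \<times> 'a \<Rightarrow> 'k) \<Rightarrow> ('a \<Rightarrow> 'k)) \<Rightarrow> (('b \<times> 'b \<Rightarrow> 'k) \<Rightarrow> ('b \<Rightarrow> 'k))
    \<Rightarrow> (('a \<times> 'b) \<times> ('a \<times> 'b) \<Rightarrow> 'k::comm_semiring_1) \<Rightarrow> 'a \<times> 'b \<Rightarrow> 'k" where
  "tens_mult m1 m2 = (\<lambda>w. tmap m1 m2 (tmid w))"

definition is_algebra :: "(('a \<times> 'a \<Rightarrow> 'k::field) \<Rightarrow> ('a \<Rightarrow> 'k)) \<Rightarrow> ('a \<Rightarrow> 'k) \<Rightarrow> bool" where
  "is_algebra m u \<longleftrightarrow> linmap m \<and> u \<in> fsupp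
     \<and> (\<forall>w\<in>fsupp. m (tmap m id w) = m (tmap id m (tassoc w)))
     \<and> (\<forall>v\<in>fsupp. m (tens u v) = v \<and> m (tens v u) = v)"

definition nonzero_algebra :: "('a \<Rightarrow> 'k::zero) \<Rightarrow> bool" where
  "nonzero_algebra u \<longleftrightarrow> u \<noteq> (\<lambda>_. 0)"

definition alg_hom :: "(('a \<times> 'a \<Rightarrow> 'k::field) \<Rightarrow> ('a \<Rightarrow> 'k)) \<Rightarrow> ('a \<Rightarrow> 'k)
    \<Rightarrow> (('b \<times> 'b \<Rightarrow> 'k) \<Rightarrow> ('b \<Rightarrow> 'k)) \<Rightarrow> ('b \<Rightarrow> 'k) \<Rightarrow> (('a \<Rightarrow> 'k) \<Rightarrow> ('b \<Rightarrow> 'k)) \<Rightarrow> bool" where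
  "alg_hom m1 u1 m2 u2 f \<longleftrightarrow> linmap f \<and> f u1 = u2
     \<and> (\<forall>v\<in>fsupp. \<forall>w\<in>fsupp. f (m1 (tens v w)) = m2 (tens (f v) (f w)))"

definition is_bialgebra :: "(('a \<times> 'a \<Rightarrow> 'k::field) \<Rightarrow> ('a \<Rightarrow> 'k)) \<Rightarrow> ('a \<Rightarrow> 'k)
    \<Rightarrow> (('a \<Rightarrow> 'k) \<Rightarrow> ('a \<times> 'a \<Rightarrow> 'k)) \<Rightarrow> (('a \<Rightarrow> 'k) \<Rightarrow> 'k) \<Rightarrow> bool" where
  "is_bialgebra m u D e \<longleftrightarrow> is_algebra m u \<and> linmap D \<and> linfun e
     \<and> (\<forall>v\<in>fsupp. tassoc (tmap D id (D v)) = tmap id D (D v))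
     \<and> (\<forall>v\<in>fsupp. lcontr e (D v) = v \<and> rcontr e (D v) = v)
     \<and> alg_hom m u (tens_mult m m) (tens u u) D
     \<and> e u = 1 \<and> (\<forall>v\<in>fsupp. \<forall>w\<in>fsupp. e (m (tens v w)) = e v * e w)"

definition left_comod_alg :: "(('a \<times> 'a \<Rightarrow> 'k::field) \<Rightarrow> ('a \<Rightarrow> 'k)) \<Rightarrow> ('a \<Rightarrow> 'k)
    \<Rightarrow> (('a \<Rightarrow> 'k) \<Rightarrow> ('a \<times> 'a \<Rightarrow> 'k)) \<Rightarrow> (('a \<Rightarrow> 'k) \<Rightarrow> 'k)
    \<Rightarrow> (('z \<times> 'z \<Rightarrow> 'k) \<Rightarrow> ('z \<Rightarrow> 'k)) \<Rightarrow> ('z \<Rightarrow> 'k)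
    \<Rightarrow> (('z \<Rightarrow> 'k) \<Rightarrow> ('a \<times> 'z \<Rightarrow> 'k)) \<Rightarrow> bool" where
  "left_comod_alg mA uA DA eA mZ uZ al \<longleftrightarrow>
     alg_hom mZ uZ (tens_mult mA mZ) (tens uA uZ) al
     \<and> (\<forall>z\<in>fsupp. tassoc (tmap DA id (al z)) = tmap id al (al z))
     \<and> (\<forall>z\<in>fsupp. lcontr eA (al z) = z)"

definition right_comod_alg :: "(('b \<times> 'b \<Rightarrow> 'k::field) \<Rightarrow> ('b \<Rightarrow> 'k)) \<Rightarrow> ('b \<Rightarrow> 'k)
    \<Rightarrow> (('b \<Rightarrow> 'k) \<Rightarrow> ('b \<times> 'b \<Rightarrow> 'k)) \<Rightarrow> (('b \<Rightarrow> 'k) \<Rightarrow> 'k)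
    \<Rightarrow> (('z \<times> 'z \<Rightarrow> 'k) \<Rightarrow> ('z \<Rightarrow> 'k)) \<Rightarrow> ('z \<Rightarrow> 'k)
    \<Rightarrow> (('z \<Rightarrow> 'k) \<Rightarrow> ('z \<times> 'b \<Rightarrow> 'k)) \<Rightarrow> bool" where
  "right_comod_alg mB uB DB eB mZ uZ be \<longleftrightarrow>
     alg_hom mZ uZ (tens_mult mZ mB) (tens uZ uB) be
     \<and> (\<forall>z\<in>fsupp. tassoc (tmap be id (be z)) = tmap id DB (be z))
     \<and> (\<forall>z\<in>fsupp. rcontr eB (be z) = z)"

definition hopf_galois_system ::
  "(('a \<times> 'a \<Rightarrow> 'k::field) \<Rightarrow> ('a \<Rightarrow> 'k)) \<Rightarrow> ('a \<Rightarrow> 'k)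
    \<Rightarrow> (('a \<Rightarrow> 'k) \<Rightarrow> ('a \<times> 'a \<Rightarrow> 'k)) \<Rightarrow> (('a \<Rightarrow> 'k) \<Rightarrow> 'k)
   \<Rightarrow> (('b \<times> 'b \<Rightarrow> 'k) \<Rightarrow> ('b \<Rightarrow> 'k)) \<Rightarrow> ('b \<Rightarrow> 'k)
    \<Rightarrow> (('b \<Rightarrow> 'k) \<Rightarrow> ('b \<times> 'b \<Rightarrow> 'k)) \<Rightarrow> (('b \<Rightarrow> 'k) \<Rightarrow> 'k)
   \<Rightarrow> (('z \<times> 'z \<Rightarrow> 'k) \<Rightarrow> ('z \<Rightarrow> 'k)) \<Rightarrow> ('z \<Rightarrow> 'k)
   \<Rightarrow> (('t \<times> 't \<Rightarrow> 'k) \<Rightarrow> ('t \<Rightarrow> 'k)) \<Rightarrow> ('t \<Rightarrow> 'k)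
   \<Rightarrow> (('z \<Rightarrow> 'k) \<Rightarrow> ('a \<times> 'z \<Rightarrow> 'k)) \<Rightarrow> (('z \<Rightarrow> 'k) \<Rightarrow> ('z \<times> 'b \<Rightarrow> 'k))
   \<Rightarrow> (('a \<Rightarrow> 'k) \<Rightarrow> ('z \<times> 't \<Rightarrow> 'k)) \<Rightarrow> (('b \<Rightarrow> 'k) \<Rightarrow> ('t \<times> 'z \<Rightarrow> 'k))
   \<Rightarrow> (('t \<Rightarrow> 'k) \<Rightarrow> ('z \<Rightarrow> 'k)) \<Rightarrow> bool" where
  "hopf_galois_system mA uA DA eA mB uB DB eB mZ uZ mT uT al be ga de S \<longleftrightarrow>
     \<comment> \<open>four non-zero algebras\<close>
     is_algebra mA uA \<and> is_algebra mB uB \<and> is_algebra mZ uZ \<and> is_algebra mT uT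
     \<and> nonzero_algebra uA \<and> nonzero_algebra uB \<and> nonzero_algebra uZ \<and> nonzero_algebra uT
     \<comment> \<open>(HG1)\<close>
     \<and> is_bialgebra mA uA DA eA \<and> is_bialgebra mB uB DB eB
     \<comment> \<open>(HG2)\<close>
     \<and> left_comod_alg mA uA DA eA mZ uZ al \<and> right_comod_alg mB uB DB eB mZ uZ be
     \<and> (\<forall>z\<in>fsupp. tassoc (tmap al id (be z)) = tmap id be (al z))
     \<comment> \<open>(HG3)\<close>
     \<and> alg_hom mA uA (tens_mult mZ mT) (tens uZ uT) ga
     \<and> alg_hom mB uB (tens_mult mT mZ) (tens uT uZ) de
     \<and> (\<forall>z\<in>fsupp. tassoc (tmap ga id (al z)) = tmap id de (be z))
     \<and> (\<forall>a\<in>fsupp. tassoc (tmap al id (ga a)) = tmap id ga (DA a))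
     \<and> (\<forall>b\<in>fsupp. tmap id be (de b) = tassoc (tmap de id (DB b)))
     \<comment> \<open>(HG4)\<close>
     \<and> linmap S
     \<and> (\<forall>a\<in>fsupp. mZ (tmap id S (ga a)) = smult (eA a) uZ)
     \<and> (\<forall>b\<in>fsupp. mZ (tmap S id (de b)) = smult (eB b) uZ)"

definition kappa_l :: "(('z \<Rightarrow> 'k) \<Rightarrow> ('a \<times> 'z \<Rightarrow> 'k)) \<Rightarrow> (('z \<times> 'z \<Rightarrow> 'k) \<Rightarrow> ('z \<Rightarrow> 'k))
    \<Rightarrow> ('z \<times> 'z \<Rightarrow> 'k::comm_semiring_1) \<Rightarrow> 'a \<times> 'z \<Rightarrow> 'k" where
  "kappa_l al mZ w = tmap id mZ (tassoc (tmap al id w))"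

definition kappa_r :: "(('z \<Rightarrow> 'k) \<Rightarrow> ('z \<times> 'b \<Rightarrow> 'k)) \<Rightarrow> (('z \<times> 'z \<Rightarrow> 'k) \<Rightarrow> ('z \<Rightarrow> 'k))
    \<Rightarrow> ('z \<times> 'z \<Rightarrow> 'k::comm_semiring_1) \<Rightarrow> 'z \<times> 'b \<Rightarrow> 'k" where
  "kappa_r be mZ w = tmap mZ id (tunassoc (tmap id be w))"

end

theory Submission
  imports Defs
begin

text \<open>
Both canonical maps are Z-linear extensions of a coaction: \<open>\<kappa>\<^sub>l(x \<otimes> y) = \<alpha>(x)(1 \<otimes> y)\<close> and
\<open>\<kappa>\<^sub>r(x \<otimes> y) = (x \<otimes> 1)\<beta>(y)\<close>. For an algebra Z, the extension \<open>(1 \<otimes> m\<^sub>Z)(F \<otimes> 1)\<close> of a linear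
map \<open>F : Y \<rightarrow> X \<otimes> Z\<close> commutes with right multiplications, so the extensions of F and G are
mutually inverse as soon as the extension of F sends \<open>G(x)\<close> to \<open>x \<otimes> 1\<close> and vice versa.
For \<open>\<kappa>\<^sub>l\<close> take \<open>G = (1 \<otimes> S)\<gamma>\<close>: the extension of \<open>\<alpha>\<close> sends \<open>(1 \<otimes> S)\<gamma>(a)\<close> to \<open>a \<otimes> 1\<close> by
\<open>(\<alpha> \<otimes> 1)\<gamma> = (1 \<otimes> \<gamma>)\<Delta>\<^sub>A\<close>, (HG4) for \<open>\<gamma>\<close> and the counit of A; the extension of G sends
\<open>\<alpha>(z)\<close> to \<open>z \<otimes> 1\<close> by \<open>(\<gamma> \<otimes> 1)\<alpha> = (1 \<otimes> \<delta>)\<beta>\<close>, (HG4) for \<open>\<delta>\<close> and the counit of \<open>\<beta>\<close>.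
The mirror argument with \<open>(S \<otimes> 1)\<delta>\<close> inverts \<open>\<kappa>\<^sub>r\<close>.
\<close>

section \<open>Finitely supported vectors and linear maps\<close>

lemma fsupp_iff_finite_vsupp: "v \<in> fsupp \<longleftrightarrow> finite (vsupp v)"
  by (simp add: fsupp_def vsupp_def)

lemma zero_fsupp: "(\<lambda>_. 0) \<in> fsupp"
  by (simp add: fsupp_def)

lemma delta_fsupp: "delta x \<in> fsupp"
  by (simp add: fsupp_def delta_def)

lemma smult_fsupp: "v \<in> fsupp \<Longrightarrow> smult c (v :: 'a \<Rightarrow> 'k::mult_zero) \<in> fsupp"
  unfolding fsupp_iff_finite_vsupp vsupp_def smult_def
  by (rule finite_subset[of _ "{x. v x \<noteq> 0}"]) auto

lemma tens_fsupp:
  assumes "u \<in> fsupp" "v \<in> fsupp"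
  shows "tens u (v :: 'b \<Rightarrow> 'k::mult_zero) \<in> fsupp"
  unfolding fsupp_iff_finite_vsupp
  by (rule finite_subset[of _ "vsupp u \<times> vsupp v"])
    (use assms in \<open>auto simp: vsupp_def tens_def fsupp_iff_finite_vsupp\<close>)

lemma lincomb_fsupp:
  assumes "finite I" "\<forall>i\<in>I. g i \<in> fsupp"
  shows "(\<lambda>y. \<Sum>i\<in>I. (c i :: 'k::field) * g i y) \<in> fsupp"
proof -
  have "vsupp (\<lambda>y. \<Sum>i\<in>I. c i * g i y) \<subseteq> (\<Union>i\<in>I. vsupp (g i))"
    by (auto simp: vsupp_def intro: sum.neutral)
  moreover have "finite (\<Union>i\<in>I. vsupp (g i))"
    using assms by (auto simp: fsupp_iff_finite_vsupp)
  ultimately show ?thesis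
    by (simp add: fsupp_iff_finite_vsupp finite_subset)
qed

lemma lext_eq_sum_superset:
  assumes "finite X" "vsupp v \<subseteq> X"
  shows "lext f v = (\<lambda>y. \<Sum>x\<in>X. v x * f x y)"
  unfolding lext_def
  by (rule ext, rule sum.mono_neutral_left) (use assms in \<open>auto simp: vsupp_def\<close>)

lemma lext_tens:
  fixes u :: "'a \<Rightarrow> 'k::field"
  assumes "u \<in> fsupp" "v \<in> fsupp"
  shows "lext h (tens u v) = (\<lambda>y. \<Sum>x\<in>vsupp u. \<Sum>x'\<in>vsupp v. u x * v x' * h (x, x') y)"
proof -
  have "lext h (tens u v) = (\<lambda>y. \<Sum>p\<in>vsupp u \<times> vsupp v. tens u v p * h p y)"
    by (rule lext_eq_sum_superset)
      (use assms in \<open>auto simp: fsupp_iff_finite_vsupp vsupp_def tens_def\<close>)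
  then show ?thesis
    by (simp add: sum.cartesian_product tens_def case_prod_beta')
qed

lemma delta_expansion:
  fixes v :: "'a \<Rightarrow> 'k::field"
  assumes "v \<in> fsupp"
  shows "(\<lambda>y. \<Sum>x\<in>vsupp v. v x * delta x y) = v"
proof
  fix y
  have "(\<Sum>x\<in>vsupp v. v x * delta x y) = (\<Sum>x\<in>vsupp v. if x = y then v x else 0)"
    by (rule sum.cong) (auto simp: delta_def)
  also have "\<dots> = v y"
    using assms by (simp add: fsupp_iff_finite_vsupp) (simp add: vsupp_def)
  finally show "(\<Sum>x\<in>vsupp v. v x * delta x y) = v y" .
qed

lemma delta_Pair: "(delta (x, y) :: _ \<Rightarrow> 'k::field) = tens (delta x) (delta y)"
  by (auto simp: delta_def tens_def)

lemma linmap_fsupp: "linmap F \<Longrightarrow> v \<in> fsupp \<Longrightarrow> F v \<in> fsupp"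
  by (simp add: linmap_def)

lemma linmap_vadd: "linmap F \<Longrightarrow> u \<in> fsupp \<Longrightarrow> v \<in> fsupp \<Longrightarrow> F (vadd u v) = vadd (F u) (F v)"
  by (simp add: linmap_def)

lemma linmap_smult: "linmap F \<Longrightarrow> v \<in> fsupp \<Longrightarrow> F (smult c v) = smult c (F v)"
  by (simp add: linmap_def)

lemma linmap_zero:
  assumes "linmap F"
  shows "F (\<lambda>_. 0) = (\<lambda>_. 0)"
  using linmap_smult[OF assms zero_fsupp, of 0] by (simp add: smult_def)

lemma linmap_lincomb:
  assumes "linmap F" "finite I" "\<forall>i\<in>I. g i \<in> fsupp"
  shows "F (\<lambda>y. \<Sum>i\<in>I. c i * g i y) = (\<lambda>y. \<Sum>i\<in>I. c i * F (g i) y)"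
  using assms(2,3)
proof (induction I rule: finite_induct)
  case empty
  then show ?case using linmap_zero[OF assms(1)] by simp
next
  case (insert j I)
  have "(\<lambda>y. \<Sum>i\<in>insert j I. c i * g i y)
      = vadd (smult (c j) (g j)) (\<lambda>y. \<Sum>i\<in>I. c i * g i y)"
    using insert by (simp add: vadd_def smult_def)
  moreover have "F (vadd (smult (c j) (g j)) (\<lambda>y. \<Sum>i\<in>I. c i * g i y))
      = vadd (smult (c j) (F (g j))) (F (\<lambda>y. \<Sum>i\<in>I. c i * g i y))"
    using insert assms(1) by (simp add: linmap_vadd linmap_smult smult_fsupp lincomb_fsupp)
  ultimately show ?case
    using insert by (simp add: vadd_def smult_def)
qed

lemma linmap_eq_lext_delta:
  assumes "linmap F" "v \<in> fsupp"
  shows "F v = lext (\<lambda>x. F (delta x)) v"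
proof -
  have "F v = F (\<lambda>y. \<Sum>x\<in>vsupp v. v x * delta x y)"
    using delta_expansion[OF assms(2)] by simp
  also have "\<dots> = (\<lambda>y. \<Sum>x\<in>vsupp v. v x * F (delta x) y)"
    using assms by (intro linmap_lincomb)
      (auto simp: fsupp_iff_finite_vsupp delta_fsupp[unfolded fsupp_iff_finite_vsupp])
  finally show ?thesis
    by (simp add: lext_def)
qed

lemma linmap_lext:
  assumes "\<forall>x. f x \<in> fsupp"
  shows "linmap (lext (f :: 'a \<Rightarrow> 'b \<Rightarrow> 'k::field))"
  unfolding linmap_def
proof (intro conjI ballI allI)
  fix v :: "'a \<Rightarrow> 'k"
  assume "v \<in> fsupp"
  then show "lext f v \<in> fsupp"
    unfolding lext_def using assms by (intro lincomb_fsupp) (auto simp: fsupp_iff_finite_vsupp)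
next
  fix u v :: "'a \<Rightarrow> 'k"
  assume "u \<in> fsupp" "v \<in> fsupp"
  then have X: "finite (vsupp u \<union> vsupp v)"
    by (simp add: fsupp_iff_finite_vsupp)
  have "lext f w
      = (\<lambda>y. \<Sum>x\<in>vsupp u \<union> vsupp v. w x * f x y)" if "w \<in> {u, v, vadd u v}" for w
    by (rule lext_eq_sum_superset[OF X]) (use that in \<open>auto simp: vsupp_def vadd_def\<close>)
  then show "lext f (vadd u v) = vadd (lext f u) (lext f v)"
    by (simp add: vadd_def distrib_right sum.distrib)
next
  fix c :: 'k and v :: "'a \<Rightarrow> 'k"
  assume "v \<in> fsupp"
  then have "lext f (smult c v) = (\<lambda>y. \<Sum>x\<in>vsupp v. smult c v x * f x y)"
    by (intro lext_eq_sum_superset) (auto simp: vsupp_def smult_def fsupp_iff_finite_vsupp)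
  then show "lext f (smult c v) = smult c (lext f v)"
    by (simp add: smult_def lext_def sum_distrib_left mult.assoc)
qed

lemma linmap_id: "linmap id"
  by (simp add: linmap_def)

lemma linmap_comp: "linmap F \<Longrightarrow> linmap G \<Longrightarrow> linmap (F \<circ> G)"
  by (simp add: linmap_def)

lemma linmap_eqI_delta:
  assumes "linmap F" "linmap G" "\<And>x. F (delta x) = G (delta x)" "v \<in> fsupp"
  shows "F v = G v"
  using linmap_eq_lext_delta[OF assms(1,4)] linmap_eq_lext_delta[OF assms(2,4)] assms(3) by simp

lemma linmap_eqI_tens:
  assumes "linmap F" "linmap G"
    and "\<And>u v. u \<in> fsupp \<Longrightarrow> v \<in> fsupp \<Longrightarrow> F (tens u v) = G (tens u v)"
    and "w \<in> fsupp"
  shows "F w = G w"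
  by (rule linmap_eqI_delta[OF assms(1,2) _ assms(4)]) (auto simp: delta_Pair assms(3) delta_fsupp)

lemma linmap_eqI_tens3:
  assumes "linmap F" "linmap G"
    and "\<And>u v x. u \<in> fsupp \<Longrightarrow> v \<in> fsupp \<Longrightarrow> x \<in> fsupp
          \<Longrightarrow> F (tens (tens u v) x) = G (tens (tens u v) x)"
    and "w \<in> fsupp"
  shows "F w = G w"
  by (rule linmap_eqI_delta[OF assms(1,2) _ assms(4)]) (auto simp: delta_Pair assms(3) delta_fsupp)

lemma bij_betw_fsupp_inverse:
  assumes "linmap F" "linmap G" "\<And>w. w \<in> fsupp \<Longrightarrow> G (F w) = w" "\<And>w. w \<in> fsupp \<Longrightarrow> F (G w) = w"
  shows "bij_betw F fsupp fsupp"
  by (rule bij_betw_byWitness[where f'=G]) (use assms in \<open>auto simp: linmap_fsupp\<close>)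

section \<open>Tensor products of linear maps\<close>

lemma tmap_tens:
  fixes F :: "('a \<Rightarrow> 'k::field) \<Rightarrow> ('c \<Rightarrow> 'k)" and G :: "('b \<Rightarrow> 'k) \<Rightarrow> ('d \<Rightarrow> 'k)"
  assumes F: "linmap F" and G: "linmap G" and u: "u \<in> fsupp" and v: "v \<in> fsupp"
  shows "tmap F G (tens u v) = tens (F u) (G v)"
proof
  fix p :: "'c \<times> 'd"
  obtain c d where p: "p = (c, d)" by force
  have "tmap F G (tens u v) p
      = (\<Sum>x\<in>vsupp u. \<Sum>x'\<in>vsupp v. u x * v x' * (F (delta x) c * G (delta x') d))"
    unfolding tmap_def lext_tens[OF u v] by (simp add: p tens_def)
  also have "\<dots> = (\<Sum>x\<in>vsupp u. u x * F (delta x) c) * (\<Sum>x'\<in>vsupp v. v x' * G (delta x') d)"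
    by (simp add: sum_product mult_ac)
  also have "\<dots> = F u c * G v d"
    using linmap_eq_lext_delta[OF F u] linmap_eq_lext_delta[OF G v] by (simp add: lext_def)
  finally show "tmap F G (tens u v) p = tens (F u) (G v) p"
    by (simp add: p tens_def)
qed

lemma linmap_tmap:
  fixes F :: "('a \<Rightarrow> 'k::field) \<Rightarrow> ('c \<Rightarrow> 'k)" and G :: "('b \<Rightarrow> 'k) \<Rightarrow> ('d \<Rightarrow> 'k)"
  assumes "linmap F" "linmap G"
  shows "linmap (tmap F G)"
  unfolding tmap_def
  by (rule linmap_lext) (auto intro!: tens_fsupp linmap_fsupp[OF assms(1)] linmap_fsupp[OF assms(2)] delta_fsupp)

lemma linmap_tens_left: "u \<in> fsupp \<Longrightarrow> linmap (\<lambda>v. tens u (v :: _ \<Rightarrow> 'k::field))"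
  unfolding linmap_def
  by (auto simp: tens_fsupp) (auto simp: tens_def vadd_def smult_def distrib_left mult_ac)

lemma linmap_tens_right: "v \<in> fsupp \<Longrightarrow> linmap (\<lambda>u. tens u (v :: _ \<Rightarrow> 'k::field))"
  unfolding linmap_def
  by (auto simp: tens_fsupp) (auto simp: tens_def vadd_def smult_def fun_eq_iff algebra_simps)

lemma linmap_tassoc: "linmap (tassoc :: (('a \<times> 'b) \<times> 'c \<Rightarrow> 'k::field) \<Rightarrow> _)"
  unfolding linmap_def
proof (intro conjI ballI allI)
  fix v :: "('a \<times> 'b) \<times> 'c \<Rightarrow> 'k"
  assume "v \<in> fsupp"
  moreover have "vsupp (tassoc v) = (\<lambda>((a, b), c). (a, (b, c))) ` vsupp v"
    by (force simp: vsupp_def tassoc_def image_iff)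
  ultimately show "tassoc v \<in> fsupp"
    by (simp add: fsupp_iff_finite_vsupp)
qed (auto simp: tassoc_def vadd_def smult_def)

lemma linmap_tunassoc: "linmap (tunassoc :: ('a \<times> ('b \<times> 'c) \<Rightarrow> 'k::field) \<Rightarrow> _)"
  unfolding linmap_def
proof (intro conjI ballI allI)
  fix v :: "'a \<times> ('b \<times> 'c) \<Rightarrow> 'k"
  assume "v \<in> fsupp"
  moreover have "vsupp (tunassoc v) = (\<lambda>(a, (b, c)). ((a, b), c)) ` vsupp v"
    by (force simp: vsupp_def tunassoc_def image_iff)
  ultimately show "tunassoc v \<in> fsupp"
    by (simp add: fsupp_iff_finite_vsupp)
qed (auto simp: tunassoc_def vadd_def smult_def)

lemmas linmap_intros =
  linmap_id linmap_comp linmap_tmap linmap_tassoc linmap_tunassoc linmap_tens_left linmap_tens_right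

lemma tassoc_tens: "tassoc (tens (tens a b) c) = tens a (tens b (c :: _ \<Rightarrow> 'k::semigroup_mult))"
  by (auto simp: tassoc_def tens_def mult.assoc)

lemma tunassoc_tens: "tunassoc (tens a (tens b c)) = tens (tens a b) (c :: _ \<Rightarrow> 'k::semigroup_mult)"
  by (auto simp: tunassoc_def tens_def mult.assoc)

lemma tunassoc_tassoc [simp]: "tunassoc (tassoc w) = w"
  by (auto simp: tassoc_def tunassoc_def)

lemma tassoc_tunassoc [simp]: "tassoc (tunassoc w) = w"
  by (auto simp: tassoc_def tunassoc_def)

lemma tmap_comp:
  fixes F :: "('a \<Rightarrow> 'k::field) \<Rightarrow> ('c \<Rightarrow> 'k)" and G :: "('b \<Rightarrow> 'k) \<Rightarrow> ('d \<Rightarrow> 'k)"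
    and F' :: "('c \<Rightarrow> 'k) \<Rightarrow> ('e \<Rightarrow> 'k)" and G' :: "('d \<Rightarrow> 'k) \<Rightarrow> ('f \<Rightarrow> 'k)"
  assumes F: "linmap F" and G: "linmap G" and F': "linmap F'" and G': "linmap G'" and w: "w \<in> fsupp"
  shows "tmap F' G' (tmap F G w) = tmap (F' \<circ> F) (G' \<circ> G) w"
proof -
  have "(tmap F' G' \<circ> tmap F G) w = tmap (F' \<circ> F) (G' \<circ> G) w"
  proof (rule linmap_eqI_tens[OF _ _ _ w])
    show "linmap (tmap F' G' \<circ> tmap F G)" "linmap (tmap (F' \<circ> F) (G' \<circ> G))"
      using assms by (auto intro!: linmap_intros)
  qed (use assms linmap_comp[OF F' F] linmap_comp[OF G' G] in \<open>simp add: tmap_tens linmap_fsupp comp_def\<close>)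
  then show ?thesis by simp
qed

lemma tmap_cong:
  fixes F :: "('a \<Rightarrow> 'k::field) \<Rightarrow> ('c \<Rightarrow> 'k)" and G :: "('b \<Rightarrow> 'k) \<Rightarrow> ('d \<Rightarrow> 'k)"
  assumes "linmap F" "linmap G" "linmap F'" "linmap G'" "w \<in> fsupp"
    and "\<And>u. u \<in> fsupp \<Longrightarrow> F u = F' u" "\<And>v. v \<in> fsupp \<Longrightarrow> G v = G' v"
  shows "tmap F G w = tmap F' G' w"
  by (rule linmap_eqI_tens[OF _ _ _ assms(5)]) (use assms in \<open>auto simp: tmap_tens intro!: linmap_intros\<close>)

lemma tmap_id_id: "w \<in> fsupp \<Longrightarrow> tmap id id w = (w :: _ \<Rightarrow> 'k::field)"
  using linmap_eqI_tens[of "tmap id id" id w] by (simp add: tmap_tens linmap_tmap linmap_id)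

lemma tassoc_tmap:
  fixes F :: "('a \<Rightarrow> 'k::field) \<Rightarrow> ('d \<Rightarrow> 'k)"
  assumes F: "linmap F" and G: "linmap G" and H: "linmap H" and w: "w \<in> fsupp"
  shows "tassoc (tmap (tmap F G) H w) = tmap F (tmap G H) (tassoc w)"
proof -
  have "(tassoc \<circ> tmap (tmap F G) H) w = (tmap F (tmap G H) \<circ> tassoc) w"
  proof (rule linmap_eqI_tens3[OF _ _ _ w])
    show "linmap (tassoc \<circ> tmap (tmap F G) H)" "linmap (tmap F (tmap G H) \<circ> tassoc)"
      using assms by (auto intro!: linmap_intros)
  qed (use assms in \<open>simp add: tmap_tens tassoc_tens tens_fsupp linmap_fsupp linmap_tmap\<close>)
  then show ?thesis by simp
qed

lemma tunassoc_tmap: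
  fixes F :: "('a \<Rightarrow> 'k::field) \<Rightarrow> ('d \<Rightarrow> 'k)"
  assumes "linmap F" "linmap G" "linmap H" "w \<in> fsupp"
  shows "tunassoc (tmap F (tmap G H) w) = tmap (tmap F G) H (tunassoc w)"
  using arg_cong[OF tassoc_tmap[OF assms(1-3) linmap_fsupp[OF linmap_tunassoc assms(4)]], of tunassoc]
  by simp

lemma tassoc_tmap_id:
  assumes "linmap H" "w \<in> fsupp"
  shows "tassoc (tmap id H w) = tmap id (tmap id H) (tassoc w)"
proof -
  have "tmap id H w = tmap (tmap id id) H w"
    using assms by (intro tmap_cong) (simp_all add: tmap_id_id linmap_intros)
  then show ?thesis
    using assms by (simp add: tassoc_tmap linmap_id)
qed

lemma tunassoc_tmap_id:
  assumes "linmap H" "w \<in> fsupp"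
  shows "tunassoc (tmap H id w) = tmap (tmap H id) id (tunassoc w)"
proof -
  have "tmap H id w = tmap H (tmap id id) w"
    using assms by (intro tmap_cong) (simp_all add: tmap_id_id linmap_intros)
  then show ?thesis
    using assms by (simp add: tunassoc_tmap linmap_id)
qed

lemma linfun_eq_sum_delta:
  assumes "linfun f" "v \<in> fsupp"
  shows "f v = (\<Sum>x\<in>vsupp v. v x * f (delta x))"
proof -
  have "linmap (\<lambda>v (_::unit). f v)"
    using assms(1) unfolding linmap_def linfun_def by (auto simp: fsupp_iff_finite_vsupp vadd_def smult_def)
  from linmap_eq_lext_delta[OF this assms(2)] show ?thesis
    by (simp add: lext_def fun_eq_iff)
qed

lemma linmap_smult_linfun: "linfun f \<Longrightarrow> z \<in> fsupp \<Longrightarrow> linmap (\<lambda>a. smult (f a) (z :: _ \<Rightarrow> 'k::field))"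
  unfolding linmap_def linfun_def
  by (auto simp: smult_fsupp) (auto simp: vadd_def smult_def distrib_right)

lemma linmap_lcontr: "linmap (lcontr (f :: ('a \<Rightarrow> 'k::field) \<Rightarrow> 'k) :: ('a \<times> 'b \<Rightarrow> 'k) \<Rightarrow> _)"
  unfolding lcontr_def by (rule linmap_lext) (auto intro!: smult_fsupp delta_fsupp)

lemma linmap_rcontr: "linmap (rcontr (f :: ('b \<Rightarrow> 'k::field) \<Rightarrow> 'k) :: ('a \<times> 'b \<Rightarrow> 'k) \<Rightarrow> _)"
  unfolding rcontr_def by (rule linmap_lext) (auto intro!: smult_fsupp delta_fsupp)

lemma lcontr_tens:
  fixes u :: "'a \<Rightarrow> 'k::field"
  assumes f: "linfun f" and u: "u \<in> fsupp" and v: "v \<in> fsupp"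
  shows "lcontr f (tens u v) = smult (f u) v"
proof
  fix y
  have "lcontr f (tens u v) y
      = (\<Sum>x\<in>vsupp u. \<Sum>x'\<in>vsupp v. u x * v x' * (f (delta x) * delta x' y))"
    unfolding lcontr_def lext_tens[OF u v] by (simp add: smult_def)
  also have "\<dots> = (\<Sum>x\<in>vsupp u. u x * f (delta x)) * (\<Sum>x'\<in>vsupp v. v x' * delta x' y)"
    by (simp add: sum_product mult_ac)
  also have "\<dots> = f u * v y"
    using delta_expansion[OF v] linfun_eq_sum_delta[OF f u] by (metis (no_types, lifting))
  finally show "lcontr f (tens u v) y = smult (f u) v y"
    by (simp add: smult_def)
qed

lemma rcontr_tens:
  fixes u :: "'a \<Rightarrow> 'k::field"
  assumes f: "linfun f" and u: "u \<in> fsupp" and v: "v \<in> fsupp"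
  shows "rcontr f (tens u v) = smult (f v) u"
proof
  fix y
  have "rcontr f (tens u v) y
      = (\<Sum>x\<in>vsupp u. \<Sum>x'\<in>vsupp v. u x * v x' * (f (delta x') * delta x y))"
    unfolding rcontr_def lext_tens[OF u v] by (simp add: smult_def)
  also have "\<dots> = (\<Sum>x\<in>vsupp u. u x * delta x y) * (\<Sum>x'\<in>vsupp v. v x' * f (delta x'))"
    by (simp add: sum_product mult_ac)
  also have "\<dots> = u y * f v"
    using delta_expansion[OF u] linfun_eq_sum_delta[OF f v] by (metis (no_types, lifting))
  finally show "rcontr f (tens u v) y = smult (f v) u y"
    by (simp add: smult_def mult.commute)
qed

lemma tens_smult_swap: "tens (smult c u) v = tens u (smult c (v :: _ \<Rightarrow> 'k::comm_ring_1))"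
  by (auto simp: tens_def smult_def fun_eq_iff mult_ac)

lemma tmap_id_smult_linfun:
  fixes f :: "('b \<Rightarrow> 'k::field) \<Rightarrow> 'k" and z :: "'z \<Rightarrow> 'k" and w :: "'a \<times> 'b \<Rightarrow> 'k"
  assumes f: "linfun f" and z: "z \<in> fsupp" and w: "w \<in> fsupp"
  shows "tmap id (\<lambda>b. smult (f b) z) w = tens (rcontr f w) z"
proof (rule linmap_eqI_tens[of "tmap id (\<lambda>b. smult (f b) z)" "\<lambda>w. tens (rcontr f w) z", OF _ _ _ w])
  show "linmap (tmap id (\<lambda>b. smult (f b) z))"
    using f z by (intro linmap_tmap linmap_id linmap_smult_linfun)
  show "linmap (\<lambda>w. tens (rcontr f w) z)"
    using linmap_comp[OF linmap_tens_right[OF z] linmap_rcontr] by (simp add: comp_def)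
qed (use f z in \<open>simp add: tmap_tens linmap_id linmap_smult_linfun rcontr_tens tens_smult_swap\<close>)

lemma tmap_smult_linfun_id:
  fixes f :: "('b \<Rightarrow> 'k::field) \<Rightarrow> 'k" and z :: "'z \<Rightarrow> 'k" and w :: "'b \<times> 'a \<Rightarrow> 'k"
  assumes f: "linfun f" and z: "z \<in> fsupp" and w: "w \<in> fsupp"
  shows "tmap (\<lambda>b. smult (f b) z) id w = tens z (lcontr f w)"
proof (rule linmap_eqI_tens[of "tmap (\<lambda>b. smult (f b) z) id" "\<lambda>w. tens z (lcontr f w)", OF _ _ _ w])
  show "linmap (tmap (\<lambda>b. smult (f b) z) id)"
    using f z by (intro linmap_tmap linmap_id linmap_smult_linfun)
  show "linmap (\<lambda>w. tens z (lcontr f w))"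
    using linmap_comp[OF linmap_tens_left[OF z] linmap_lcontr] by (simp add: comp_def)
qed (use f z in \<open>simp add: tmap_tens linmap_id linmap_smult_linfun lcontr_tens tens_smult_swap\<close>)

section \<open>Linear extensions over an algebra\<close>

locale fs_algebra =
  fixes m :: "('z \<times> 'z \<Rightarrow> 'k::field) \<Rightarrow> ('z \<Rightarrow> 'k)" and u :: "'z \<Rightarrow> 'k"
  assumes is_algebra: "is_algebra m u"
begin

lemma linmap_m: "linmap m"
  using is_algebra by (simp add: is_algebra_def)

lemma unit_fsupp: "u \<in> fsupp"
  using is_algebra by (simp add: is_algebra_def)

lemma mult_fsupp: "x \<in> fsupp \<Longrightarrow> y \<in> fsupp \<Longrightarrow> m (tens x y) \<in> fsupp"
  by (simp add: linmap_fsupp[OF linmap_m] tens_fsupp)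

lemma mult_unit_left: "v \<in> fsupp \<Longrightarrow> m (tens u v) = v"
  using is_algebra by (simp add: is_algebra_def)

lemma mult_unit_right: "v \<in> fsupp \<Longrightarrow> m (tens v u) = v"
  using is_algebra by (simp add: is_algebra_def)

lemma mult_assoc:
  assumes "x \<in> fsupp" "y \<in> fsupp" "z \<in> fsupp"
  shows "m (tens (m (tens x y)) z) = m (tens x (m (tens y z)))"
proof -
  have "m (tmap m id (tens (tens x y) z)) = m (tmap id m (tassoc (tens (tens x y) z)))"
    using is_algebra assms by (simp add: is_algebra_def tens_fsupp)
  then show ?thesis
    using assms by (simp add: tmap_tens tassoc_tens linmap_m linmap_id tens_fsupp)
qed

definition mult_left :: "('z \<Rightarrow> 'k) \<Rightarrow> ('z \<Rightarrow> 'k) \<Rightarrow> 'z \<Rightarrow> 'k" where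
  "mult_left x y = m (tens x y)"

definition mult_right :: "('z \<Rightarrow> 'k) \<Rightarrow> ('z \<Rightarrow> 'k) \<Rightarrow> 'z \<Rightarrow> 'k" where
  "mult_right y x = m (tens x y)"

lemma linmap_mult_left: "x \<in> fsupp \<Longrightarrow> linmap (mult_left x)"
  using linmap_comp[OF linmap_m linmap_tens_left] by (simp add: mult_left_def[abs_def] comp_def)

lemma linmap_mult_right: "y \<in> fsupp \<Longrightarrow> linmap (mult_right y)"
  using linmap_comp[OF linmap_m linmap_tens_right] by (simp add: mult_right_def[abs_def] comp_def)

text \<open>\<open>right_ext F (y \<otimes> z) = F(y)(1 \<otimes> z)\<close> and \<open>left_ext F (z \<otimes> y) = (z \<otimes> 1)F(y)\<close>;
  the canonical maps are \<open>\<kappa>\<^sub>l = right_ext \<alpha>\<close> and \<open>\<kappa>\<^sub>r = left_ext \<beta>\<close>.\<close>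

definition right_ext :: "(('y \<Rightarrow> 'k) \<Rightarrow> ('x \<times> 'z \<Rightarrow> 'k)) \<Rightarrow> ('y \<times> 'z \<Rightarrow> 'k) \<Rightarrow> 'x \<times> 'z \<Rightarrow> 'k" where
  "right_ext F w = tmap id m (tassoc (tmap F id w))"

definition left_ext :: "(('y \<Rightarrow> 'k) \<Rightarrow> ('z \<times> 'x \<Rightarrow> 'k)) \<Rightarrow> ('z \<times> 'y \<Rightarrow> 'k) \<Rightarrow> 'z \<times> 'x \<Rightarrow> 'k" where
  "left_ext F w = tmap m id (tunassoc (tmap id F w))"

lemma linmap_right_ext: "linmap F \<Longrightarrow> linmap (right_ext F)"
  using linmap_comp[OF linmap_comp[OF linmap_tmap[OF linmap_id linmap_m] linmap_tassoc]
      linmap_tmap[OF _ linmap_id]]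
  by (simp add: right_ext_def[abs_def] comp_def)

lemma linmap_left_ext: "linmap F \<Longrightarrow> linmap (left_ext F)"
  using linmap_comp[OF linmap_comp[OF linmap_tmap[OF linmap_m linmap_id] linmap_tunassoc]
      linmap_tmap[OF linmap_id]]
  by (simp add: left_ext_def[abs_def] comp_def)

lemma right_ext_tens:
  assumes F: "linmap F" and x: "x \<in> fsupp" and y: "y \<in> fsupp"
  shows "right_ext F (tens x y) = tmap id (mult_right y) (F x)"
proof -
  have "(tmap id m \<circ> tassoc \<circ> (\<lambda>v. tens v y)) (F x)
      = tmap id (mult_right y) (F x)"
  proof (rule linmap_eqI_tens[of "tmap id m \<circ> tassoc \<circ> (\<lambda>v. tens v y)" "tmap id (mult_right y)",
        OF _ _ _ linmap_fsupp[OF F x]])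
    show "linmap (tmap id m \<circ> tassoc \<circ> (\<lambda>v. tens v y))" "linmap (tmap id (mult_right y))"
      using y by (auto intro!: linmap_intros linmap_m linmap_mult_right)
  qed (use y in \<open>simp add: tmap_tens tassoc_tens linmap_m linmap_mult_right mult_right_def
      linmap_id tens_fsupp\<close>)
  then show ?thesis
    using F x y by (simp add: right_ext_def tmap_tens linmap_id linmap_fsupp)
qed

lemma left_ext_tens:
  assumes F: "linmap F" and x: "x \<in> fsupp" and y: "y \<in> fsupp"
  shows "left_ext F (tens x y) = tmap (mult_left x) id (F y)"
proof -
  have "(tmap m id \<circ> tunassoc \<circ> tens x) (F y) = tmap (mult_left x) id (F y)"
  proof (rule linmap_eqI_tens[of "tmap m id \<circ> tunassoc \<circ> tens x" "tmap (mult_left x) id",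
        OF _ _ _ linmap_fsupp[OF F y]])
    show "linmap (tmap m id \<circ> tunassoc \<circ> tens x)" "linmap (tmap (mult_left x) id)"
      using x by (auto intro!: linmap_intros linmap_m linmap_mult_left)
  qed (use x in \<open>simp add: tmap_tens tunassoc_tens linmap_m linmap_mult_left mult_left_def
      linmap_id tens_fsupp\<close>)
  then show ?thesis
    using F x y by (simp add: left_ext_def tmap_tens linmap_id linmap_fsupp)
qed

lemma right_ext_mult_right:
  fixes F :: "('y \<Rightarrow> 'k) \<Rightarrow> ('x \<times> 'z \<Rightarrow> 'k)"
  assumes F: "linmap F" and z: "z \<in> fsupp" and w: "w \<in> fsupp"
  shows "right_ext F (tmap id (mult_right z) w) = tmap id (mult_right z) (right_ext F w)"
proof -
  have "(right_ext F \<circ> tmap id (mult_right z)) w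
      = (tmap id (mult_right z) \<circ> right_ext F) w"
  proof (rule linmap_eqI_tens[of "right_ext F \<circ> tmap id (mult_right z)"
        "tmap id (mult_right z) \<circ> right_ext F", OF _ _ _ w])
    show "linmap (right_ext F \<circ> tmap id (mult_right z))" "linmap (tmap id (mult_right z) \<circ> right_ext F)"
      using F z by (auto intro!: linmap_intros linmap_right_ext linmap_mult_right)
    fix x :: "'y \<Rightarrow> 'k" and y :: "'z \<Rightarrow> 'k"
    assume x: "x \<in> fsupp" and y: "y \<in> fsupp"
    have Fx: "F x \<in> fsupp"
      using F x by (rule linmap_fsupp)
    have "tmap id (mult_right z) (tmap id (mult_right y) (F x))
        = tmap id (mult_right z \<circ> mult_right y) (F x)"
      using y z Fx by (simp add: tmap_comp linmap_id linmap_mult_right)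
    also have "\<dots> = tmap id (mult_right (mult_right z y)) (F x)"
      by (rule tmap_cong[OF _ _ _ _ Fx])
        (use y z in \<open>auto intro!: linmap_intros linmap_mult_right linmap_fsupp[OF linmap_mult_right]
          simp: mult_right_def mult_assoc mult_fsupp\<close>)
    finally show "(right_ext F \<circ> tmap id (mult_right z)) (tens x y)
        = (tmap id (mult_right z) \<circ> right_ext F) (tens x y)"
      using F x y z by (simp add: tmap_tens right_ext_tens linmap_id linmap_mult_right linmap_fsupp)
  qed
  then show ?thesis by simp
qed

lemma left_ext_mult_left:
  fixes F :: "('y \<Rightarrow> 'k) \<Rightarrow> ('z \<times> 'x \<Rightarrow> 'k)"
  assumes F: "linmap F" and z: "z \<in> fsupp" and w: "w \<in> fsupp"
  shows "left_ext F (tmap (mult_left z) id w) = tmap (mult_left z) id (left_ext F w)"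
proof -
  have "(left_ext F \<circ> tmap (mult_left z) id) w = (tmap (mult_left z) id \<circ> left_ext F) w"
  proof (rule linmap_eqI_tens[of "left_ext F \<circ> tmap (mult_left z) id"
        "tmap (mult_left z) id \<circ> left_ext F", OF _ _ _ w])
    show "linmap (left_ext F \<circ> tmap (mult_left z) id)" "linmap (tmap (mult_left z) id \<circ> left_ext F)"
      using F z by (auto intro!: linmap_intros linmap_left_ext linmap_mult_left)
    fix x :: "'z \<Rightarrow> 'k" and y :: "'y \<Rightarrow> 'k"
    assume x: "x \<in> fsupp" and y: "y \<in> fsupp"
    have Fy: "F y \<in> fsupp"
      using F y by (rule linmap_fsupp)
    have "tmap (mult_left z) id (tmap (mult_left x) id (F y))
        = tmap (mult_left z \<circ> mult_left x) id (F y)"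
      using x z Fy by (simp add: tmap_comp linmap_id linmap_mult_left)
    also have "\<dots> = tmap (mult_left (mult_left z x)) id (F y)"
      by (rule tmap_cong[OF _ _ _ _ Fy])
        (use x z in \<open>auto intro!: linmap_intros linmap_mult_left linmap_fsupp[OF linmap_mult_left]
          simp: mult_left_def mult_assoc mult_fsupp\<close>)
    finally show "(left_ext F \<circ> tmap (mult_left z) id) (tens x y)
        = (tmap (mult_left z) id \<circ> left_ext F) (tens x y)"
      using F x y z by (simp add: tmap_tens left_ext_tens linmap_id linmap_mult_left linmap_fsupp)
  qed
  then show ?thesis by simp
qed

lemma right_ext_inverse:
  fixes F :: "('y \<Rightarrow> 'k) \<Rightarrow> ('x \<times> 'z \<Rightarrow> 'k)" and G :: "('x \<Rightarrow> 'k) \<Rightarrow> ('y \<times> 'z \<Rightarrow> 'k)"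
  assumes F: "linmap F" and G: "linmap G"
    and FG: "\<And>x. x \<in> fsupp \<Longrightarrow> right_ext F (G x) = tens x u" and w: "w \<in> fsupp"
  shows "right_ext F (right_ext G w) = w"
proof -
  have "(right_ext F \<circ> right_ext G) w = id w"
  proof (rule linmap_eqI_tens[of "right_ext F \<circ> right_ext G" id, OF _ _ _ w])
    fix x :: "'x \<Rightarrow> 'k" and y :: "'z \<Rightarrow> 'k"
    assume x: "x \<in> fsupp" and y: "y \<in> fsupp"
    have "right_ext F (right_ext G (tens x y)) = tmap id (mult_right y) (right_ext F (G x))"
      using F G x y by (simp add: right_ext_tens right_ext_mult_right linmap_fsupp)
    also have "\<dots> = tens x y"
      using x y by (simp add: FG tmap_tens linmap_id linmap_mult_right unit_fsupp mult_right_def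
          mult_unit_left)
    finally show "(right_ext F \<circ> right_ext G) (tens x y) = id (tens x y)"
      by simp
  qed (use F G in \<open>auto intro!: linmap_intros linmap_right_ext\<close>)
  then show ?thesis by simp
qed

lemma left_ext_inverse:
  fixes F :: "('y \<Rightarrow> 'k) \<Rightarrow> ('z \<times> 'x \<Rightarrow> 'k)" and G :: "('x \<Rightarrow> 'k) \<Rightarrow> ('z \<times> 'y \<Rightarrow> 'k)"
  assumes F: "linmap F" and G: "linmap G"
    and FG: "\<And>x. x \<in> fsupp \<Longrightarrow> left_ext F (G x) = tens u x" and w: "w \<in> fsupp"
  shows "left_ext F (left_ext G w) = w"
proof -
  have "(left_ext F \<circ> left_ext G) w = id w"
  proof (rule linmap_eqI_tens[of "left_ext F \<circ> left_ext G" id, OF _ _ _ w])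
    fix x :: "'z \<Rightarrow> 'k" and y :: "'x \<Rightarrow> 'k"
    assume x: "x \<in> fsupp" and y: "y \<in> fsupp"
    have "left_ext F (left_ext G (tens x y)) = tmap (mult_left x) id (left_ext F (G y))"
      using F G x y by (simp add: left_ext_tens left_ext_mult_left linmap_fsupp)
    also have "\<dots> = tens x y"
      using x y by (simp add: FG tmap_tens linmap_id linmap_mult_left unit_fsupp mult_left_def
          mult_unit_right)
    finally show "(left_ext F \<circ> left_ext G) (tens x y) = id (tens x y)"
      by simp
  qed (use F G in \<open>auto intro!: linmap_intros linmap_left_ext\<close>)
  then show ?thesis by simp
qed

lemma bij_betw_right_ext:
  assumes "linmap F" "linmap G"
    and "\<And>x. x \<in> fsupp \<Longrightarrow> right_ext F (G x) = tens x u"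
    and "\<And>y. y \<in> fsupp \<Longrightarrow> right_ext G (F y) = tens y u"
  shows "bij_betw (right_ext F) fsupp fsupp"
  by (rule bij_betw_fsupp_inverse[of _ "right_ext G"])
    (simp_all add: assms linmap_right_ext right_ext_inverse)

lemma bij_betw_left_ext:
  assumes "linmap F" "linmap G"
    and "\<And>x. x \<in> fsupp \<Longrightarrow> left_ext F (G x) = tens u x"
    and "\<And>y. y \<in> fsupp \<Longrightarrow> left_ext G (F y) = tens u y"
  shows "bij_betw (left_ext F) fsupp fsupp"
  by (rule bij_betw_fsupp_inverse[of _ "left_ext G"])
    (simp_all add: assms linmap_left_ext left_ext_inverse)

end

section \<open>Hopf-Galois systems\<close>

locale hopf_galois_data = fs_algebra mZ uZ
  for mZ :: "('z \<times> 'z \<Rightarrow> 'k::field) \<Rightarrow> ('z \<Rightarrow> 'k)" and uZ +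
  fixes DA :: "('a \<Rightarrow> 'k) \<Rightarrow> ('a \<times> 'a \<Rightarrow> 'k)" and eA :: "('a \<Rightarrow> 'k) \<Rightarrow> 'k"
    and DB :: "('b \<Rightarrow> 'k) \<Rightarrow> ('b \<times> 'b \<Rightarrow> 'k)" and eB :: "('b \<Rightarrow> 'k) \<Rightarrow> 'k"
    and al :: "('z \<Rightarrow> 'k) \<Rightarrow> ('a \<times> 'z \<Rightarrow> 'k)" and be :: "('z \<Rightarrow> 'k) \<Rightarrow> ('z \<times> 'b \<Rightarrow> 'k)"
    and ga :: "('a \<Rightarrow> 'k) \<Rightarrow> ('z \<times> 't \<Rightarrow> 'k)" and de :: "('b \<Rightarrow> 'k) \<Rightarrow> ('t \<times> 'z \<Rightarrow> 'k)"
    and S :: "('t \<Rightarrow> 'k) \<Rightarrow> ('z \<Rightarrow> 'k)"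
  assumes linmap_DA: "linmap DA" and linmap_DB: "linmap DB"
    and linmap_al: "linmap al" and linmap_be: "linmap be"
    and linmap_ga: "linmap ga" and linmap_de: "linmap de" and linmap_S: "linmap S"
    and linfun_eA: "linfun eA" and linfun_eB: "linfun eB"
    and DA_counit: "\<And>a. a \<in> fsupp \<Longrightarrow> rcontr eA (DA a) = a"
    and DB_counit: "\<And>b. b \<in> fsupp \<Longrightarrow> lcontr eB (DB b) = b"
    and al_counit: "\<And>z. z \<in> fsupp \<Longrightarrow> lcontr eA (al z) = z"
    and be_counit: "\<And>z. z \<in> fsupp \<Longrightarrow> rcontr eB (be z) = z"
    and ga_al_eq_de_be: "\<And>z. z \<in> fsupp \<Longrightarrow> tassoc (tmap ga id (al z)) = tmap id de (be z)"
    and al_ga_eq_ga_DA: "\<And>a. a \<in> fsupp \<Longrightarrow> tassoc (tmap al id (ga a)) = tmap id ga (DA a)"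
    and be_de_eq_de_DB: "\<And>b. b \<in> fsupp \<Longrightarrow> tmap id be (de b) = tassoc (tmap de id (DB b))"
    and antipode_ga: "\<And>a. a \<in> fsupp \<Longrightarrow> mZ (tmap id S (ga a)) = smult (eA a) uZ"
    and antipode_de: "\<And>b. b \<in> fsupp \<Longrightarrow> mZ (tmap S id (de b)) = smult (eB b) uZ"
begin

lemmas linmap_structure = linmap_DA linmap_DB linmap_al linmap_be linmap_ga linmap_de linmap_S
  linmap_m linmap_id linmap_tmap linmap_comp linmap_tassoc linmap_tunassoc

lemma right_ext_al_antipode_ga:
  assumes a: "a \<in> fsupp"
  shows "right_ext al (tmap id S (ga a)) = tens a uZ"
proof -
  have "right_ext al (tmap id S (ga a)) = tmap id mZ (tassoc (tmap id S (tmap al id (ga a))))"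
    using a by (simp add: right_ext_def tmap_comp linmap_structure linmap_fsupp)
  also have "\<dots> = tmap id mZ (tmap id (tmap id S) (tmap id ga (DA a)))"
    using a by (simp add: tassoc_tmap_id al_ga_eq_ga_DA linmap_structure linmap_fsupp)
  also have "\<dots> = tmap id (mZ \<circ> tmap id S \<circ> ga) (DA a)"
    using a by (simp add: tmap_comp linmap_structure linmap_fsupp comp_assoc)
  also have "\<dots> = tmap id (\<lambda>b. smult (eA b) uZ) (DA a)"
    using a by (intro tmap_cong) (simp_all add: linmap_structure antipode_ga linmap_smult_linfun
        linfun_eA unit_fsupp linmap_fsupp)
  also have "\<dots> = tens a uZ"
    using a by (simp add: tmap_id_smult_linfun linfun_eA unit_fsupp DA_counit
        linmap_structure linmap_fsupp)
  finally show ?thesis .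
qed

lemma right_ext_antipode_ga_al:
  assumes x: "x \<in> fsupp"
  shows "right_ext (tmap id S \<circ> ga) (al x) = tens x uZ"
proof -
  have "right_ext (tmap id S \<circ> ga) (al x)
      = tmap id mZ (tassoc (tmap (tmap id S) id (tmap ga id (al x))))"
    using x by (simp add: right_ext_def tmap_comp linmap_structure linmap_fsupp)
  also have "\<dots> = tmap id mZ (tmap id (tmap S id) (tmap id de (be x)))"
    using x by (simp add: tassoc_tmap ga_al_eq_de_be linmap_structure linmap_fsupp)
  also have "\<dots> = tmap id (mZ \<circ> tmap S id \<circ> de) (be x)"
    using x by (simp add: tmap_comp linmap_structure linmap_fsupp comp_assoc)
  also have "\<dots> = tmap id (\<lambda>b. smult (eB b) uZ) (be x)"
    using x by (intro tmap_cong) (simp_all add: linmap_structure antipode_de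
        linmap_smult_linfun linfun_eB unit_fsupp linmap_fsupp)
  also have "\<dots> = tens x uZ"
    using x by (simp add: tmap_id_smult_linfun linfun_eB unit_fsupp be_counit
        linmap_structure linmap_fsupp)
  finally show ?thesis .
qed

lemma left_ext_be_antipode_de:
  assumes b: "b \<in> fsupp"
  shows "left_ext be (tmap S id (de b)) = tens uZ b"
proof -
  have "left_ext be (tmap S id (de b)) = tmap mZ id (tunassoc (tmap S id (tmap id be (de b))))"
    using b by (simp add: left_ext_def tmap_comp linmap_structure linmap_fsupp)
  also have "\<dots> = tmap mZ id (tmap (tmap S id) id (tmap de id (DB b)))"
    using b by (simp add: tunassoc_tmap_id be_de_eq_de_DB linmap_structure linmap_fsupp)
  also have "\<dots> = tmap (mZ \<circ> tmap S id \<circ> de) id (DB b)"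
    using b by (simp add: tmap_comp linmap_structure linmap_fsupp comp_assoc)
  also have "\<dots> = tmap (\<lambda>b. smult (eB b) uZ) id (DB b)"
    using b by (intro tmap_cong) (simp_all add: linmap_structure antipode_de
        linmap_smult_linfun linfun_eB unit_fsupp linmap_fsupp)
  also have "\<dots> = tens uZ b"
    using b by (simp add: tmap_smult_linfun_id linfun_eB unit_fsupp DB_counit
        linmap_structure linmap_fsupp)
  finally show ?thesis .
qed

lemma left_ext_antipode_de_be:
  assumes x: "x \<in> fsupp"
  shows "left_ext (tmap S id \<circ> de) (be x) = tens uZ x"
proof -
  have "left_ext (tmap S id \<circ> de) (be x)
      = tmap mZ id (tunassoc (tmap id (tmap S id) (tmap id de (be x))))"
    using x by (simp add: left_ext_def tmap_comp linmap_structure linmap_fsupp)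
  also have "\<dots> = tmap mZ id (tmap (tmap id S) id (tmap ga id (al x)))"
    using x by (simp add: tunassoc_tmap linmap_structure linmap_fsupp flip: ga_al_eq_de_be)
  also have "\<dots> = tmap (mZ \<circ> tmap id S \<circ> ga) id (al x)"
    using x by (simp add: tmap_comp linmap_structure linmap_fsupp comp_assoc)
  also have "\<dots> = tmap (\<lambda>a. smult (eA a) uZ) id (al x)"
    using x by (intro tmap_cong) (simp_all add: linmap_structure antipode_ga
        linmap_smult_linfun linfun_eA unit_fsupp linmap_fsupp)
  also have "\<dots> = tens uZ x"
    using x by (simp add: tmap_smult_linfun_id linfun_eA unit_fsupp al_counit
        linmap_structure linmap_fsupp)
  finally show ?thesis .
qed

lemma bij_betw_kappa_l: "bij_betw (kappa_l al mZ) fsupp fsupp"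
proof -
  have "kappa_l al mZ = right_ext al"
    by (simp add: kappa_l_def right_ext_def fun_eq_iff)
  moreover have "bij_betw (right_ext al) fsupp fsupp"
    by (rule bij_betw_right_ext[of al "tmap id S \<circ> ga"])
      (simp_all add: linmap_structure right_ext_al_antipode_ga right_ext_antipode_ga_al)
  ultimately show ?thesis by simp
qed

lemma bij_betw_kappa_r: "bij_betw (kappa_r be mZ) fsupp fsupp"
proof -
  have "kappa_r be mZ = left_ext be"
    by (simp add: kappa_r_def left_ext_def fun_eq_iff)
  moreover have "bij_betw (left_ext be) fsupp fsupp"
    by (rule bij_betw_left_ext[of be "tmap S id \<circ> de"])
      (simp_all add: linmap_structure left_ext_be_antipode_de left_ext_antipode_de_be)
  ultimately show ?thesis by simp
qed

end

lemma hopf_galois_system_imp_data: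
  assumes "hopf_galois_system mA uA DA eA mB uB DB eB mZ uZ mT uT al be ga de S"
  shows "hopf_galois_data mZ uZ DA eA DB eB al be ga de S"
  using assms
  unfolding hopf_galois_system_def hopf_galois_data_def hopf_galois_data_axioms_def fs_algebra_def
    is_bialgebra_def left_comod_alg_def right_comod_alg_def alg_hom_def
  by simp

theorem theorem1p2:
  fixes mA :: "('a \<times> 'a \<Rightarrow> 'k::field) \<Rightarrow> ('a \<Rightarrow> 'k)"
    and mB :: "('b \<times> 'b \<Rightarrow> 'k) \<Rightarrow> ('b \<Rightarrow> 'k)"
    and mZ :: "('z \<times> 'z \<Rightarrow> 'k) \<Rightarrow> ('z \<Rightarrow> 'k)"
    and mT :: "('t \<times> 't \<Rightarrow> 'k) \<Rightarrow> ('t \<Rightarrow> 'k)"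
  assumes "hopf_galois_system mA uA DA eA mB uB DB eB mZ uZ mT uT al be ga de S"
  shows "bij_betw (kappa_l al mZ) fsupp fsupp \<and> bij_betw (kappa_r be mZ) fsupp fsupp"
proof -
  interpret hopf_galois_data mZ uZ DA eA DB eB al be ga de S
    using hopf_galois_system_imp_data[OF assms] .
  show ?thesis
    using bij_betw_kappa_l bij_betw_kappa_r ..
qed

end
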